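(* Let $\Delta$ be a lattice $d$-simplex in $\mathbb{R}^d$ which is an antichain simplex, and let $K$ be a field. Then the $\mathbb{Z}^{d+1}$-graded Poincaré series of $K$ over $\mathrm{FPA}(\Delta)$ is \[ P^K_{\mathrm{FPA}(\Delta)}(z;\mathbf{t})=\left(1-\sum_{\sigma\in P(\Delta),\ \sigma\neq0} z\,\mathbf{t}^{\sigma}\right)^{-1}, \] and in particular this Poincaré series is rational.
   Context: For a lattice $d$-simplex $\Delta$ with vertices $v_0,\dots,v_d\in\mathbb{Z}^d$, the fundamental parallelepiped is $\Pi_\Delta=\{\sum_{i=0}^d\gamma_i(1,v_i):0\le\gamma_i<1\}\subset\mathbb{R}^{d+1}$. The fundamental parallelepiped poset $P(\Delta)$ is the set $\Pi_\Delta\cap\mathbb{Z}^{d+1}$ with $\sigma\preceq\mu$ iff $\mu-\sigma\in\Pi_\Delta\cap\mathbb{Z}^{d+1}$. $\Delta$ is an antichain simplex if $P(\Delta)\setminus\{0\}$ has no relations between distinct elements. The fundamental parallelepiped algebra $\mathrm{FPA}(\Delta)$ is the $K$-algebra with $K$-basis $\{e_\sigma:\sigma\in\Pi_\Delta\cap\mathbb{Z}^{d+1}\}$ and multiplication $e_\sigma e_\mu=e_{\sigma+\mu}$ if $\sigma+\mu\in\Pi_\Delta\cap\mathbb{Z}^{d+1}$ and $e_\sigma e_\mu=0$ otherwise; it is $\mathbb{Z}^{d+1}$-graded with $e_\sigma$ in degree $\sigma$, and $K=\mathrm{FPA}(\Delta)/\mathfrak m$ where $\mathfrak m$ is spanned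 by the $e_\sigma$, $\sigma\ne0$. For a graded algebra $R$ and graded module $M$, $\beta^R_{i,\alpha}(M)$ is the dimension of the degree-$\alpha$ part of the $i$-th homology of $K\otimes_R F$ for a graded free resolution $F$ of $M$ (i.e. $\dim_K\mathrm{Tor}^R_i(K,M)_\alpha$), and the Poincaré series is $P^M_R(z;\mathbf t)=\sum_{\alpha}\sum_{i\ge0}\beta^R_{i,\alpha}(M)z^i\mathbf t^\alpha$, with $\mathbf t^\alpha=t_0^{\alpha_0}\cdots t_d^{\alpha_d}$. *)

theory Defs
  imports "HOL-Analysis.Analysis" "HOL-Library.Function_Algebras"
begin

text \<open>Lattice points of Z^(d+1) are int lists of length d+1 (coordinate 0 is the
homogenising coordinate). A lattice d-simplex is given by its vertices v 0, ..., v d,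
each an int list of length d.\<close>

definition hvert :: "(nat \<Rightarrow> int list) \<Rightarrow> nat \<Rightarrow> int list" where
  "hvert v i = 1 # v i"

definition lzero :: "nat \<Rightarrow> int list" where
  "lzero d = replicate (Suc d) 0"

definition ladd :: "int list \<Rightarrow> int list \<Rightarrow> int list" where
  "ladd x y = map2 (+) x y"

definition lsub :: "int list \<Rightarrow> int list \<Rightarrow> int list" where
  "lsub x y = map2 (-) x y"

definition lsum :: "nat \<Rightarrow> int list list \<Rightarrow> int list" where
  "lsum d s = foldr ladd s (lzero d)"

definition lattice_simplex :: "nat \<Rightarrow> (nat \<Rightarrow> int list) \<Rightarrow> bool" where
  "lattice_simplex d v \<longleftrightarrow>
     (\<forall>i\<le>d. length (v i) = d) \<and>
     (\<forall>\<gamma>::nat \<Rightarrow> real.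
        (\<forall>j\<le>d. (\<Sum>i\<le>d. \<gamma> i * real_of_int (hvert v i ! j)) = 0) \<longrightarrow> (\<forall>i\<le>d. \<gamma> i = 0))"

text \<open>The lattice points of the fundamental parallelepiped, i.e. the set P(Delta).\<close>
definition fpp :: "nat \<Rightarrow> (nat \<Rightarrow> int list) \<Rightarrow> int list set" where
  "fpp d v = {x. length x = Suc d \<and>
     (\<exists>\<gamma>::nat \<Rightarrow> real. (\<forall>i\<le>d. 0 \<le> \<gamma> i \<and> \<gamma> i < 1) \<and>
        (\<forall>j\<le>d. real_of_int (x ! j) = (\<Sum>i\<le>d. \<gamma> i * real_of_int (hvert v i ! j))))}"

definition fpp_le :: "nat \<Rightarrow> (nat \<Rightarrow> int list) \<Rightarrow> int list \<Rightarrow> int list \<Rightarrow> bool" where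
  "fpp_le d v \<sigma> \<mu> \<longleftrightarrow> \<sigma> \<in> fpp d v \<and> \<mu> \<in> fpp d v \<and> lsub \<mu> \<sigma> \<in> fpp d v"

definition antichain_simplex :: "nat \<Rightarrow> (nat \<Rightarrow> int list) \<Rightarrow> bool" where
  "antichain_simplex d v \<longleftrightarrow>
     (\<forall>\<sigma>\<in>fpp d v - {lzero d}. \<forall>\<mu>\<in>fpp d v - {lzero d}. fpp_le d v \<sigma> \<mu> \<longrightarrow> \<sigma> = \<mu>)"

text \<open>Multiplication of basis elements of FPA(Delta):
e_sigma e_mu = e_(sigma+mu) if sigma+mu lies in P(Delta), and 0 (None) otherwise.\<close>
definition fpa_mult :: "nat \<Rightarrow> (nat \<Rightarrow> int list) \<Rightarrow> int list \<Rightarrow> int list \<Rightarrow> int list option" where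
  "fpa_mult d v \<sigma> \<mu> = (if ladd \<sigma> \<mu> \<in> fpp d v then Some (ladd \<sigma> \<mu>) else None)"

text \<open>Tor^R_i(K,K)_alpha for R = FPA(Delta) computed with the (normalized) bar resolution
of K over R: K \<otimes>_R (bar resolution) has, in homological degree i and multidegree alpha,
the K-basis e_s1|...|e_si with s_j nonzero elements of P(Delta) summing to alpha, and
differential d(a_1|...|a_i) = sum_{j=1}^{i-1} (-1)^j a_1|...|a_j a_(j+1)|...|a_i.
Chains are K-valued functions supported on this basis.\<close>
definition bar_basis :: "nat \<Rightarrow> (nat \<Rightarrow> int list) \<Rightarrow> nat \<Rightarrow> int list \<Rightarrow> int list list set" where
  "bar_basis d v i \<alpha> = {s. length s = i \<and> set s \<subseteq> fpp d v - {lzero d} \<and> lsum d s = \<alpha>}"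

definition bar_chains :: "'k::field itself \<Rightarrow> nat \<Rightarrow> (nat \<Rightarrow> int list) \<Rightarrow> nat \<Rightarrow> int list
    \<Rightarrow> (int list list \<Rightarrow> 'k) set" where
  "bar_chains K d v i \<alpha> = {c. \<forall>s. c s \<noteq> 0 \<longrightarrow> s \<in> bar_basis d v i \<alpha>}"

definition bar_d :: "nat \<Rightarrow> (nat \<Rightarrow> int list) \<Rightarrow> nat \<Rightarrow> int list
    \<Rightarrow> (int list list \<Rightarrow> 'k::field) \<Rightarrow> (int list list \<Rightarrow> 'k)" where
  "bar_d d v i \<alpha> c = (\<lambda>t. \<Sum>s\<in>bar_basis d v i \<alpha>. \<Sum>j<i - 1.
      (case fpa_mult d v (s ! j) (s ! Suc j) of
         None \<Rightarrow> 0
       | Some \<tau> \<Rightarrow> (if t = take j s @ \<tau> # drop (Suc (Suc j)) s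
                    then (- 1) ^ Suc j * c s else 0)))"

definition kdim :: "'k::field itself \<Rightarrow> (int list list \<Rightarrow> 'k) set \<Rightarrow> nat" where
  "kdim K W = vector_space.dim (\<lambda>(a::'k) f x. a * f x) W"

text \<open>Graded Betti number beta_{i,alpha}(K) = dim_K Tor_i^{FPA(Delta)}(K,K)_alpha
 = dim(cycles) - dim(boundaries).\<close>
definition betti :: "'k::field itself \<Rightarrow> nat \<Rightarrow> (nat \<Rightarrow> int list) \<Rightarrow> nat \<Rightarrow> int list \<Rightarrow> nat" where
  "betti K d v i \<alpha> =
     kdim K {c \<in> bar_chains K d v i \<alpha>. bar_d d v i \<alpha> c = 0}
     - kdim K (bar_d d v (Suc i) \<alpha> ` bar_chains K d v (Suc i) \<alpha>)"

end

theory Submission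
  imports Defs
begin

text \<open>In an antichain simplex every product \<open>e\<^sub>\<sigma> e\<^sub>\<mu>\<close> of two nonzero elements of
\<open>P(\<Delta>)\<close> vanishes: \<open>\<sigma> + \<mu> \<in> P(\<Delta>)\<close> would give \<open>\<sigma> \<preceq> \<sigma> + \<mu>\<close> between nonzero
elements (the homogenising coordinate of a nonzero element is at least 1), forcing \<open>\<mu> = 0\<close>.
Hence the maximal ideal squares to zero, the normalized bar complex has zero differential, and
\<open>\<beta>(i,\<alpha>)\<close> counts the words \<open>\<sigma>\<^sub>1 \<dots> \<sigma>\<^sub>i\<close> of nonzero elements of \<open>P(\<Delta>)\<close> summing to
\<open>\<alpha>\<close>. Splitting off the first letter gives \<open>\<beta>(i,\<alpha>) = \<Sum>\<^sub>\<sigma> \<beta>(i - 1, \<alpha> - \<sigma>)\<close>, the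
coefficientwise form of \<open>P(z;t) (1 - \<Sum>\<^sub>\<sigma> z t\<^sup>\<sigma>) = 1\<close>.\<close>

lemma vector_space_fun: "vector_space (\<lambda>(a::'k::field) (f::'a \<Rightarrow> 'k) x. a * f x)"
  by unfold_locales (auto simp: algebra_simps plus_fun_def fun_eq_iff)

lemma sum_apply: "sum f A x = (\<Sum>a\<in>A. f a x)"
  by (induction A rule: infinite_finite_induct) auto

lemma dim_functions_supported_on:
  assumes fin: "finite S"
  shows "vector_space.dim (\<lambda>(a::'k::field) (f::'a \<Rightarrow> 'k) x. a * f x)
           {c. \<forall>s. c s \<noteq> 0 \<longrightarrow> s \<in> S} = card S"
proof -
  interpret V: vector_space "\<lambda>(a::'k) (f::'a \<Rightarrow> 'k) x. a * f x" by (rule vector_space_fun)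
  define V where "V = {c :: 'a \<Rightarrow> 'k. \<forall>s. c s \<noteq> 0 \<longrightarrow> s \<in> S}"
  define e :: "'a \<Rightarrow> 'a \<Rightarrow> 'k" where "e s = (\<lambda>t. if t = s then 1 else 0)" for s
  have inj: "inj_on e S"
    by (auto simp: inj_on_def e_def fun_eq_iff)
  have "e ` S \<subseteq> V"
    by (auto simp: V_def e_def split: if_splits)
  moreover have "V \<subseteq> V.span (e ` S)"
  proof
    fix c assume c: "c \<in> V"
    have "c = (\<Sum>s\<in>S. (\<lambda>t. c s * e s t))"
    proof
      fix t
      have "(\<Sum>s\<in>S. (\<lambda>t. c s * e s t)) t = (if t \<in> S then c t else 0)"
        using fin by (simp add: sum_apply e_def if_distrib cong: if_cong)
      then show "c t = (\<Sum>s\<in>S. (\<lambda>t. c s * e s t)) t"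
        using c by (auto simp: V_def)
    qed
    also have "\<dots> \<in> V.span (e ` S)"
      by (intro V.span_sum V.span_scale[of _ _ "c _", simplified] V.span_base) auto
    finally show "c \<in> V.span (e ` S)" .
  qed
  moreover have "V.independent (e ` S)"
  proof (rule V.independent_if_scalars_zero)
    show "finite (e ` S)" using fin by simp
    fix f x assume h: "(\<Sum>x\<in>e ` S. (\<lambda>y. f x * x y)) = 0" and "x \<in> e ` S"
    then obtain s where s: "s \<in> S" "x = e s" by auto
    have "0 = (\<Sum>u\<in>S. f (e u) * e u s)"
      using arg_cong[OF h, of "\<lambda>g. g s"] by (simp add: sum_apply sum.reindex[OF inj])
    also have "\<dots> = f (e s)"
      using fin s by (simp add: e_def if_distrib cong: if_cong)
    finally show "f x = 0" using s by simp
  qed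
  ultimately have "card (e ` S) = V.dim V"
    by (rule V.basis_card_eq_dim)
  then show ?thesis
    by (simp add: V_def card_image[OF inj])
qed

lemma kdim_functions_supported_on:
  "finite S \<Longrightarrow> kdim K {c. \<forall>s. c s \<noteq> 0 \<longrightarrow> s \<in> S} = card S"
  unfolding kdim_def by (rule dim_functions_supported_on)

lemma kdim_zero: "kdim K {0} = 0"
proof -
  have "kdim K {0} = kdim K {c. \<forall>s. c s \<noteq> 0 \<longrightarrow> s \<in> {}}"
    by (rule arg_cong[where f = "kdim K"]) auto
  also have "\<dots> = card ({} :: int list list set)"
    by (rule kdim_functions_supported_on) simp
  finally show ?thesis by simp
qed

lemma length_ladd [simp]: "length (ladd x y) = min (length x) (length y)"
  by (simp add: ladd_def)

lemma ladd_eq_iff_eq_lsub: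
  assumes "length a = n" "length b = n" "length c = n"
  shows "ladd a b = c \<longleftrightarrow> b = lsub c a"
  using assms by (auto simp: list_eq_iff_nth_eq ladd_def lsub_def)

lemma length_lzero [simp]: "length (lzero d) = Suc d"
  by (simp add: lzero_def)

lemma lsum_Cons: "lsum d (x # s) = ladd x (lsum d s)"
  by (simp add: lsum_def)

lemma length_fpp: "x \<in> fpp d v \<Longrightarrow> length x = Suc d"
  by (simp add: fpp_def)

lemma length_lsum: "set s \<subseteq> fpp d v \<Longrightarrow> length (lsum d s) = Suc d"
  by (induction s) (auto simp: lsum_def length_fpp)

lemma fpp_coord_bound:
  assumes x: "x \<in> fpp d v" and j: "j \<le> d"
  shows "\<bar>x ! j\<bar> \<le> (\<Sum>i\<le>d. \<bar>hvert v i ! j\<bar>)"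
proof -
  from x obtain \<gamma> :: "nat \<Rightarrow> real" where \<gamma>: "\<forall>i\<le>d. 0 \<le> \<gamma> i \<and> \<gamma> i < 1"
    and x_eq: "real_of_int (x ! j) = (\<Sum>i\<le>d. \<gamma> i * real_of_int (hvert v i ! j))"
    using j by (auto simp: fpp_def)
  have "\<bar>real_of_int (x ! j)\<bar> \<le> (\<Sum>i\<le>d. \<bar>\<gamma> i * real_of_int (hvert v i ! j)\<bar>)"
    unfolding x_eq by (rule sum_abs)
  also have "\<dots> \<le> (\<Sum>i\<le>d. real_of_int \<bar>hvert v i ! j\<bar>)"
  proof (rule sum_mono)
    fix i assume "i \<in> {..d}"
    then have "0 \<le> \<gamma> i" "\<gamma> i \<le> 1"
      using \<gamma> by auto
    then show "\<bar>\<gamma> i * real_of_int (hvert v i ! j)\<bar> \<le> real_of_int \<bar>hvert v i ! j\<bar>"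
      by (simp add: abs_mult mult_left_le_one_le)
  qed
  also have "\<dots> = real_of_int (\<Sum>i\<le>d. \<bar>hvert v i ! j\<bar>)"
    by simp
  finally show ?thesis by linarith
qed

lemma finite_fpp: "finite (fpp d v)"
proof -
  define M where "M = (\<Sum>j\<le>d. \<Sum>i\<le>d. \<bar>hvert v i ! j\<bar>)"
  have "fpp d v \<subseteq> {xs. set xs \<subseteq> {-M..M} \<and> length xs = Suc d}"
  proof safe
    fix x e assume x: "x \<in> fpp d v" and "e \<in> set x"
    then obtain j where j: "j \<le> d" "e = x ! j"
      by (auto simp: in_set_conv_nth length_fpp less_Suc_eq_le)
    have "(\<Sum>i\<le>d. \<bar>hvert v i ! j\<bar>) \<le> M"
      unfolding M_def using j by (intro member_le_sum) (auto intro: sum_nonneg)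
    with fpp_coord_bound[OF x j(1)] j show "e \<in> {-M..M}" by auto
  qed (rule length_fpp)
  then show ?thesis
    by (rule finite_subset) (simp add: finite_lists_length_eq)
qed

lemma fpp_head_ge_1:
  assumes x: "x \<in> fpp d v" and nz: "x \<noteq> lzero d"
  shows "1 \<le> x ! 0"
proof (rule ccontr)
  assume "\<not> 1 \<le> x ! 0"
  from x obtain \<gamma> :: "nat \<Rightarrow> real" where \<gamma>: "\<forall>i\<le>d. 0 \<le> \<gamma> i \<and> \<gamma> i < 1"
    and x_eq: "\<forall>j\<le>d. real_of_int (x ! j) = (\<Sum>i\<le>d. \<gamma> i * real_of_int (hvert v i ! j))"
    by (auto simp: fpp_def)
  have "real_of_int (x ! 0) = (\<Sum>i\<le>d. \<gamma> i)"
    using x_eq by (simp add: hvert_def)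
  moreover have "0 \<le> (\<Sum>i\<le>d. \<gamma> i)"
    using \<gamma> by (intro sum_nonneg) auto
  ultimately have "(\<Sum>i\<le>d. \<gamma> i) = 0"
    using \<open>\<not> 1 \<le> x ! 0\<close> by linarith
  then have "\<forall>i\<le>d. \<gamma> i = 0"
    using \<gamma> by (subst (asm) sum_nonneg_eq_0_iff) auto
  then have "x = lzero d"
    using x_eq length_fpp[OF x]
    by (auto simp: lzero_def list_eq_iff_nth_eq simp del: replicate_Suc)
  with nz show False ..
qed

lemma antichain_fpa_mult_eq_None:
  assumes ac: "antichain_simplex d v"
    and \<sigma>: "\<sigma> \<in> fpp d v - {lzero d}" and \<mu>: "\<mu> \<in> fpp d v - {lzero d}"
  shows "fpa_mult d v \<sigma> \<mu> = None"
proof (rule ccontr)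
  assume "fpa_mult d v \<sigma> \<mu> \<noteq> None"
  then have sum_in: "ladd \<sigma> \<mu> \<in> fpp d v"
    by (auto simp: fpa_mult_def split: if_splits)
  have len: "length \<sigma> = Suc d" "length \<mu> = Suc d"
    using \<sigma> \<mu> length_fpp by auto
  have head: "ladd \<sigma> \<mu> ! 0 = \<sigma> ! 0 + \<mu> ! 0"
    using len by (simp add: ladd_def)
  have "1 \<le> \<sigma> ! 0" "1 \<le> \<mu> ! 0"
    using \<sigma> \<mu> fpp_head_ge_1 by auto
  then have sum_nz: "ladd \<sigma> \<mu> \<noteq> lzero d"
    using head by (auto simp: lzero_def)
  have "lsub (ladd \<sigma> \<mu>) \<sigma> = \<mu>"
    using ladd_eq_iff_eq_lsub[of \<sigma> "Suc d" \<mu> "ladd \<sigma> \<mu>"] len by simp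
  then have "fpp_le d v \<sigma> (ladd \<sigma> \<mu>)"
    using \<sigma> \<mu> sum_in by (simp add: fpp_le_def)
  then have "\<sigma> = ladd \<sigma> \<mu>"
    using ac \<sigma> sum_in sum_nz by (auto simp: antichain_simplex_def)
  then have "\<mu> ! 0 = 0"
    using head by simp
  with \<open>1 \<le> \<mu> ! 0\<close> show False by simp
qed

lemma antichain_bar_d_eq_0:
  assumes ac: "antichain_simplex d v"
  shows "bar_d d v i \<alpha> c = 0"
proof -
  have "fpa_mult d v (s ! j) (s ! Suc j) = None"
    if s: "s \<in> bar_basis d v i \<alpha>" and j: "j < i - 1" for s j
  proof -
    have "set s \<subseteq> fpp d v - {lzero d}" "j < length s" "Suc j < length s"
      using s j by (auto simp: bar_basis_def)
    then have "s ! j \<in> fpp d v - {lzero d}" "s ! Suc j \<in> fpp d v - {lzero d}"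
      using nth_mem[of j s] nth_mem[of "Suc j" s] by blast+
    then show ?thesis
      using antichain_fpa_mult_eq_None[OF ac] by blast
  qed
  then show ?thesis
    by (simp add: bar_d_def fun_eq_iff)
qed

lemma finite_bar_basis: "finite (bar_basis d v i \<alpha>)"
proof -
  have "bar_basis d v i \<alpha> \<subseteq> {s. set s \<subseteq> fpp d v - {lzero d} \<and> length s = i}"
    by (auto simp: bar_basis_def)
  then show ?thesis
    by (rule finite_subset) (simp add: finite_lists_length_eq finite_fpp)
qed

lemma antichain_betti_eq_card:
  assumes ac: "antichain_simplex d v"
  shows "betti K d v i \<alpha> = card (bar_basis d v i \<alpha>)"
proof -
  have cycles: "{c \<in> bar_chains K d v i \<alpha>. bar_d d v i \<alpha> c = 0}
      = {c. \<forall>s. c s \<noteq> 0 \<longrightarrow> s \<in> bar_basis d v i \<alpha>}"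
    using antichain_bar_d_eq_0[OF ac] by (auto simp: bar_chains_def)
  have boundaries: "bar_d d v (Suc i) \<alpha> ` bar_chains K d v (Suc i) \<alpha> = {0}"
    using antichain_bar_d_eq_0[OF ac]
    by (auto simp: bar_chains_def intro!: image_eqI[of _ _ "\<lambda>_. 0"])
  show ?thesis
    unfolding betti_def cycles boundaries kdim_zero
    by (simp add: kdim_functions_supported_on finite_bar_basis)
qed

lemma bar_basis_0: "bar_basis d v 0 \<alpha> = (if \<alpha> = lzero d then {[]} else {})"
  by (auto simp: bar_basis_def lsum_def)

lemma bar_basis_Suc:
  assumes \<alpha>: "length \<alpha> = Suc d"
  shows "bar_basis d v (Suc i) \<alpha>
           = (\<Union>\<sigma>\<in>fpp d v - {lzero d}. (#) \<sigma> ` bar_basis d v i (lsub \<alpha> \<sigma>))"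
proof -
  have split_head: "ladd \<sigma> (lsum d t) = \<alpha> \<longleftrightarrow> lsum d t = lsub \<alpha> \<sigma>"
    if "\<sigma> \<in> fpp d v" "set t \<subseteq> fpp d v" for \<sigma> t
    using ladd_eq_iff_eq_lsub[of \<sigma> "Suc d" "lsum d t" \<alpha>] that \<alpha>
    by (simp add: length_fpp length_lsum)
  show ?thesis
  proof (intro equalityI subsetI)
    fix s assume "s \<in> bar_basis d v (Suc i) \<alpha>"
    then obtain \<sigma> t where s: "s = \<sigma> # t" and \<sigma>: "\<sigma> \<in> fpp d v - {lzero d}"
      and "set t \<subseteq> fpp d v - {lzero d}" "length t = i" "ladd \<sigma> (lsum d t) = \<alpha>"
      by (auto simp: bar_basis_def lsum_Cons length_Suc_conv)
    then have "t \<in> bar_basis d v i (lsub \<alpha> \<sigma>)"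
      using split_head[of \<sigma> t] by (auto simp: bar_basis_def)
    with s \<sigma> show "s \<in> (\<Union>\<sigma>\<in>fpp d v - {lzero d}. (#) \<sigma> ` bar_basis d v i (lsub \<alpha> \<sigma>))"
      by blast
  next
    fix s assume "s \<in> (\<Union>\<sigma>\<in>fpp d v - {lzero d}. (#) \<sigma> ` bar_basis d v i (lsub \<alpha> \<sigma>))"
    then obtain \<sigma> t where "s = \<sigma> # t" "\<sigma> \<in> fpp d v - {lzero d}"
      "t \<in> bar_basis d v i (lsub \<alpha> \<sigma>)"
      by blast
    then show "s \<in> bar_basis d v (Suc i) \<alpha>"
      using split_head[of \<sigma> t] by (auto simp: bar_basis_def lsum_Cons)
  qed
qed

lemma card_bar_basis_Suc:
  assumes "length \<alpha> = Suc d"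
  shows "card (bar_basis d v (Suc i) \<alpha>)
           = (\<Sum>\<sigma>\<in>fpp d v - {lzero d}. card (bar_basis d v i (lsub \<alpha> \<sigma>)))"
  unfolding bar_basis_Suc[OF assms]
  by (subst card_UN_disjoint) (auto simp: finite_fpp finite_bar_basis card_image)

theorem theorem5p6:
  fixes K :: "'k::field itself" and d :: nat and v :: "nat \<Rightarrow> int list"
  assumes "lattice_simplex d v" and "antichain_simplex d v"
  shows "\<forall>i \<alpha>. length \<alpha> = Suc d \<longrightarrow>
           int (betti K d v i \<alpha>)
           - (if i = 0 then 0
              else (\<Sum>\<sigma>\<in>fpp d v - {lzero d}. int (betti K d v (i - 1) (lsub \<alpha> \<sigma>))))
           = (if i = 0 \<and> \<alpha> = lzero d then 1 else 0)"
proof (intro allI impI)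
  fix i and \<alpha> :: "int list"
  assume \<alpha>: "length \<alpha> = Suc d"
  note betti_eq = antichain_betti_eq_card[OF assms(2)]
  show "int (betti K d v i \<alpha>)
           - (if i = 0 then 0
              else (\<Sum>\<sigma>\<in>fpp d v - {lzero d}. int (betti K d v (i - 1) (lsub \<alpha> \<sigma>))))
           = (if i = 0 \<and> \<alpha> = lzero d then 1 else 0)"
  proof (cases i)
    case 0
    then show ?thesis by (simp add: betti_eq bar_basis_0)
  next
    case (Suc k)
    have "int (betti K d v (Suc k) \<alpha>)
        = (\<Sum>\<sigma>\<in>fpp d v - {lzero d}. int (betti K d v k (lsub \<alpha> \<sigma>)))"
      by (simp only: betti_eq card_bar_basis_Suc[OF \<alpha>] of_nat_sum)
    then show ?thesis
      using Suc by simp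
  qed
qed

end
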